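(* Let $P=\operatorname{conv}(W(\Lambda))$ be a full-dimensional $W$-symmetric polytope, $K\subseteq S$, and let $F$ be a facet of $P$ whose barycenter lies in $C_K$. (1) The stabilizer $W_F$ of $F$ in $W_K$ is generated by the simple reflections $r_k$, $k\in K$, that fix the barycenter of $F$. (2) If $P$ is non-degenerate, then for every $s\in W_K$ the intersection $s(F)\cap F$ is either $F$ or empty.
   Context: $V$ is a real Euclidean space of dimension $n$, $R$ a reduced root system spanning $V$ with simple system $S=\{\alpha_1,\dots,\alpha_n\}$ identified with $\{1,\dots,n\}$; $r_i(x)=x-\frac{2\langle x,\alpha_i\rangle}{\langle\alpha_i,\alpha_i\rangle}\alpha_i$; $W$ generated by all $r_i$, $W_K$ by $r_k$, $k\in K$. $C_K=\{x:\langle x,\alpha_k\rangle\ge0\ \forall k\in K\}$; $\Lambda\subset C_S$ finite. $P$ is non-degenerate if no vertex of $P$ lies on the boundary of $C_S$. *)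

theory Defs
  imports "HOL-Analysis.Analysis"
begin

definition refl :: "'a::euclidean_space \<Rightarrow> 'a \<Rightarrow> 'a" where
  "refl \<alpha> x = x - ((2 * (x \<bullet> \<alpha>)) / (\<alpha> \<bullet> \<alpha>)) *\<^sub>R \<alpha>"

definition reduced_root_system :: "'a::euclidean_space set \<Rightarrow> bool" where
  "reduced_root_system R \<longleftrightarrow>
     finite R \<and> 0 \<notin> R \<and> span R = UNIV \<and>
     (\<forall>\<alpha>\<in>R. refl \<alpha> ` R = R) \<and>
     (\<forall>\<alpha>\<in>R. \<forall>\<beta>\<in>R. (2 * (\<beta> \<bullet> \<alpha>)) / (\<alpha> \<bullet> \<alpha>) \<in> \<int>) \<and>
     (\<forall>\<alpha>\<in>R. \<forall>c::real. c *\<^sub>R \<alpha> \<in> R \<longrightarrow> c = 1 \<or> c = -1)"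

definition simple_system :: "'a::euclidean_space set \<Rightarrow> 'a set \<Rightarrow> bool" where
  "simple_system R S \<longleftrightarrow> S \<subseteq> R \<and> independent S \<and>
     (\<forall>\<beta>\<in>R. \<exists>c. \<beta> = (\<Sum>\<alpha>\<in>S. c \<alpha> *\<^sub>R \<alpha>) \<and>
        ((\<forall>\<alpha>\<in>S. c \<alpha> \<ge> 0) \<or> (\<forall>\<alpha>\<in>S. c \<alpha> \<le> 0)))"

text \<open>The group W_K generated by the simple reflections r_k, k in K. Since each
  r_k is an involution, the monoid generated equals the group generated.\<close>
inductive_set refl_group :: "'a::euclidean_space set \<Rightarrow> ('a \<Rightarrow> 'a) set"
  for K :: "'a set" where
  id: "id \<in> refl_group K"
| step: "k \<in> K \<Longrightarrow> w \<in> refl_group K \<Longrightarrow> refl k \<circ> w \<in> refl_group K"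

definition chamber :: "'a::euclidean_space set \<Rightarrow> 'a set" where
  "chamber K = {x. \<forall>k\<in>K. x \<bullet> k \<ge> 0}"

definition barycenter :: "'a::euclidean_space set \<Rightarrow> 'a" where
  "barycenter F = (1 / real (card {v. v extreme_point_of F})) *\<^sub>R (\<Sum>v\<in>{v. v extreme_point_of F}. v)"

definition non_degenerate :: "'a::euclidean_space set \<Rightarrow> 'a set \<Rightarrow> bool" where
  "non_degenerate S P \<longleftrightarrow> (\<forall>v. v extreme_point_of P \<longrightarrow> v \<notin> frontier (chamber S))"

end

theory Submission
  imports Defs
begin

text \<open>
  Part (1) is Chevalley's theorem: the stabiliser in \<open>W\<^sub>K\<close> of a point \<open>b\<close> of the closed chamber
  \<open>C\<^sub>K\<close> is generated by the simple reflections fixing \<open>b\<close>. It applies to the barycentre of \<open>F\<close>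
  because \<open>W\<close> permutes the faces of \<open>P\<close> and the barycentre lies in the relative interior of
  \<open>F\<close>, so \<open>w\<close> fixes \<open>F\<close> iff it fixes its barycentre.

  For (2), write \<open>F = P \<inter> {y. a \<bullet> y = h}\<close> with \<open>a \<bullet> y \<le> h\<close> on \<open>P\<close> and pick a vertex \<open>x\<close> of
  the face \<open>s F \<inter> F\<close>. Non-degeneracy makes \<open>x\<close> regular, i.e. orthogonal to no root. Both
  \<open>a\<close> and \<open>s a\<close> maximise \<open>y \<mapsto> y \<bullet> x\<close> on the \<open>W\<^sub>K\<close>-orbit of \<open>a\<close>; after moving \<open>x\<close> and \<open>a\<close>
  into \<open>C\<^sub>K\<close> the dominance order shows that this maximiser is unique, so \<open>s a = a\<close> and
  \<open>s F = F\<close>.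
\<close>

section \<open>Groups generated by reflections\<close>

(* Since x / 0 = 0, refl 0 is the identity; so none of the facts below needs a \<noteq> 0. *)
lemma refl_zero [simp]: "refl 0 = id"
  by (simp add: refl_def fun_eq_iff)

lemma refl_refl [simp]: "refl a (refl a x) = x"
proof (cases "a = 0")
  case False
  then show ?thesis
    by (simp add: refl_def algebra_simps)
qed simp

lemma orthogonal_transformation_refl: "orthogonal_transformation (refl a)"
  unfolding orthogonal_transformation_def
proof
  show "linear (refl a)"
    unfolding refl_def
    by (rule linearI) (auto simp: algebra_simps add_divide_distrib)
  show "\<forall>x y. refl a x \<bullet> refl a y = x \<bullet> y"
    by (simp add: refl_def algebra_simps inner_commute)
qed

lemma refl_inner_self: "refl a x \<bullet> a = - (x \<bullet> a)"
  by (cases "a = 0") (simp_all add: refl_def inner_diff_left)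

lemma refl_fixed_iff: "refl a x = x \<longleftrightarrow> x \<bullet> a = 0"
  by (cases "a = 0") (auto simp: refl_def)

lemma refl_orthogonal_transformation:
  assumes "orthogonal_transformation f"
  shows "refl (f a) \<circ> f = f \<circ> refl a"
  using assms
  by (simp add: refl_def fun_eq_iff orthogonal_transformation_def linear_diff linear_scale)

primrec refl_word :: "'a::euclidean_space list \<Rightarrow> 'a \<Rightarrow> 'a" where
  "refl_word [] = id"
| "refl_word (k # ks) = refl k \<circ> refl_word ks"

lemma refl_word_append: "refl_word (ks @ ls) = refl_word ks \<circ> refl_word ls"
  by (induction ks) auto

lemma orthogonal_transformation_refl_word: "orthogonal_transformation (refl_word ks)"
proof (induction ks)
  case (Cons k ks)
  then show ?case
    unfolding refl_word.simps
    by (intro orthogonal_transformation_compose orthogonal_transformation_refl)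
qed (simp add: id_def)

lemma refl_word_rev: "refl_word (rev ks) = inv (refl_word ks)"
proof -
  have "refl_word (rev ks) \<circ> refl_word ks = id" for ks :: "'a list"
    by (induction ks) (auto simp: refl_word_append fun_eq_iff)
  from this[of ks] this[of "rev ks"] show ?thesis
    by (intro inv_unique_comp[symmetric]) simp_all
qed

lemma refl_word_diff_in_span: "refl_word ks x - x \<in> span (set ks)"
proof (induction ks)
  case (Cons k ks)
  have eq: "refl_word (k # ks) x - x
      = (refl_word ks x - x) - ((2 * (refl_word ks x \<bullet> k)) / (k \<bullet> k)) *\<^sub>R k"
    by (simp add: refl_def algebra_simps)
  have "refl_word ks x - x \<in> span (set (k # ks))"
    using Cons span_mono[of "set ks" "set (k # ks)"] by auto
  then show ?case
    unfolding eq by (simp add: span_diff span_scale span_base)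
qed (simp add: span_zero)

lemma refl_group_eq: "refl_group K = {refl_word ks |ks. set ks \<subseteq> K}"
proof (intro set_eqI iffI)
  show "w \<in> {refl_word ks |ks. set ks \<subseteq> K}" if "w \<in> refl_group K" for w
    using that
  proof induction
    case id
    then show ?case by (force intro: exI[of _ "[]"])
  next
    case (step k w)
    then obtain ks where "set ks \<subseteq> K" "w = refl_word ks" by auto
    with step show ?case by (force intro: exI[of _ "k # ks"])
  qed
  have "refl_word ks \<in> refl_group K" if "set ks \<subseteq> K" for ks
    using that by (induction ks) (auto intro: refl_group.intros)
  then show "w \<in> refl_group K" if "w \<in> {refl_word ks |ks. set ks \<subseteq> K}" for w
    using that by blast
qed

lemma refl_group_mono: "K \<subseteq> L \<Longrightarrow> refl_group K \<subseteq> refl_group L"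
  unfolding refl_group_eq by blast

lemma refl_group_comp:
  "v \<in> refl_group K \<Longrightarrow> w \<in> refl_group K \<Longrightarrow> v \<circ> w \<in> refl_group K"
  unfolding refl_group_eq by clarify (metis le_sup_iff refl_word_append set_append)

lemma refl_group_inv: "w \<in> refl_group K \<Longrightarrow> inv w \<in> refl_group K"
  unfolding refl_group_eq by clarify (metis refl_word_rev set_rev)

lemma orthogonal_transformation_refl_group:
  "w \<in> refl_group K \<Longrightarrow> orthogonal_transformation w"
  unfolding refl_group_eq by (auto simp: orthogonal_transformation_refl_word)

lemma refl_group_diff_in_span: "w \<in> refl_group K \<Longrightarrow> w x - x \<in> span K"
  unfolding refl_group_eq using refl_word_diff_in_span span_mono by blast

lemma refl_group_fixes:
  "w \<in> refl_group K \<Longrightarrow> (\<And>k. k \<in> K \<Longrightarrow> refl k x = x) \<Longrightarrow> w x = x"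
  by (induction rule: refl_group.induct) auto

lemma refl_group_image_subset:
  "w \<in> refl_group K \<Longrightarrow> (\<And>k. k \<in> K \<Longrightarrow> refl k ` R \<subseteq> R) \<Longrightarrow> w ` R \<subseteq> R"
  by (induction rule: refl_group.induct) (auto simp: image_comp[symmetric])

lemma inv_refl_group_apply [simp]: "w \<in> refl_group K \<Longrightarrow> inv w (w x) = x"
  by (meson inv_f_f orthogonal_transformation_inj orthogonal_transformation_refl_group)

lemma refl_group_apply_inv [simp]: "w \<in> refl_group K \<Longrightarrow> w (inv w x) = x"
  by (meson bij_inv_eq_iff orthogonal_transformation_bij orthogonal_transformation_refl_group)

lemma refl_group_image_orbit:
  assumes "w \<in> refl_group K"
  shows "w ` (\<Union>v\<in>refl_group K. v ` X) = (\<Union>v\<in>refl_group K. v ` X)"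
proof
  show "w ` (\<Union>v\<in>refl_group K. v ` X) \<subseteq> (\<Union>v\<in>refl_group K. v ` X)"
    using refl_group_comp[OF assms] by fastforce
  have "v y = w ((inv w \<circ> v) y)" if "v \<in> refl_group K" for v y
    using assms by simp
  then show "(\<Union>v\<in>refl_group K. v ` X) \<subseteq> w ` (\<Union>v\<in>refl_group K. v ` X)"
    using refl_group_comp[OF refl_group_inv[OF assms]] by blast
qed

definition reduced_word :: "'a::euclidean_space set \<Rightarrow> 'a list \<Rightarrow> bool" where
  "reduced_word K ks \<longleftrightarrow> set ks \<subseteq> K \<and>
     (\<forall>ls. set ls \<subseteq> K \<longrightarrow> refl_word ls = refl_word ks \<longrightarrow> length ks \<le> length ls)"

lemma ex_reduced_word:
  assumes "w \<in> refl_group K"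
  obtains ks where "reduced_word K ks" "refl_word ks = w"
proof -
  define word where "word ls \<longleftrightarrow> set ls \<subseteq> K \<and> refl_word ls = w" for ls
  obtain ks where "word ks"
    using assms by (auto simp: refl_group_eq word_def)
  then obtain ks where "word ks" "\<And>ls. word ls \<Longrightarrow> length ks \<le> length ls"
    using ex_has_least_nat[of word ks length] by blast
  then show thesis
    using that unfolding reduced_word_def word_def by metis
qed

lemma reduced_word_ConsD:
  assumes "reduced_word K (k # ks)"
  shows "k \<in> K" "reduced_word K ks"
proof -
  show "k \<in> K" using assms by (simp add: reduced_word_def)
  have "length ks \<le> length ls" if "set ls \<subseteq> K" "refl_word ls = refl_word ks" for ls
    using assms that unfolding reduced_word_def
    by (metis Suc_le_mono insert_subset length_Cons list.simps(15) refl_word.simps(2))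
  then show "reduced_word K ks"
    using assms by (simp add: reduced_word_def)
qed

lemma refl_group_reduced_induct [consumes 1, case_names id step]:
  assumes "w \<in> refl_group K"
    and "P id"
    and "\<And>k ks. reduced_word K (k # ks) \<Longrightarrow> P (refl_word ks) \<Longrightarrow> P (refl k \<circ> refl_word ks)"
  shows "P w"
proof -
  obtain ks where "reduced_word K ks" "refl_word ks = w"
    using ex_reduced_word[OF assms(1)] .
  moreover have "P (refl_word ks)" if "reduced_word K ks" for ks
    using that by (induction ks) (simp_all add: assms(2,3) reduced_word_ConsD(2))
  ultimately show ?thesis by blast
qed

section \<open>Faces of polytopes\<close>

lemma extreme_point_of_linear_image:
  assumes "linear f" "inj f"
  shows "f x extreme_point_of f ` S \<longleftrightarrow> x extreme_point_of S"
  using face_of_linear_image[OF assms, of "{x}" S] by (simp add: face_of_singleton)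

lemma barycenter_linear_image:
  assumes "linear f" "inj f"
  shows "barycenter (f ` F) = f (barycenter F)"
proof -
  let ?E = "{v. v extreme_point_of F}"
  have "{v. v extreme_point_of f ` F} = f ` ?E"
  proof
    show "{v. v extreme_point_of f ` F} \<subseteq> f ` ?E"
    proof
      fix y assume y: "y \<in> {v. v extreme_point_of f ` F}"
      then obtain x where "y = f x"
        by (auto simp: extreme_point_of_def)
      with y show "y \<in> f ` ?E"
        using extreme_point_of_linear_image[OF assms] by blast
    qed
    show "f ` ?E \<subseteq> {v. v extreme_point_of f ` F}"
      using extreme_point_of_linear_image[OF assms] by blast
  qed
  moreover have "inj_on f ?E"
    using assms(2) inj_on_subset by blast
  ultimately have "barycenter (f ` F) = (1 / real (card ?E)) *\<^sub>R (\<Sum>v\<in>?E. f v)"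
    unfolding barycenter_def by (simp add: card_image sum.reindex)
  also have "\<dots> = f (barycenter F)"
    unfolding barycenter_def linear_scale[OF assms(1)] linear_sum[OF assms(1)] ..
  finally show ?thesis .
qed

lemma barycenter_in_rel_interior:
  assumes "polytope F" "F \<noteq> {}"
  shows "barycenter F \<in> rel_interior F"
proof -
  define E where "E = {v. v extreme_point_of F}"
  have F_hull: "F = convex hull E"
    unfolding E_def using assms(1)
    by (simp add: Krein_Milman_Minkowski polytope_imp_compact polytope_imp_convex)
  obtain V where "finite V" "F = convex hull V"
    using assms(1) polytope_def by blast
  then have "E \<subseteq> V"
    using extreme_points_of_convex_hull[of V] by (simp add: E_def)
  then have "finite E"
    using \<open>finite V\<close> finite_subset by blast
  moreover have "E \<noteq> {}"
    using assms(2) F_hull by auto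
  ultimately have card_pos: "0 < card E"
    by (simp add: card_gt_0_iff)
  have "(\<Sum>x\<in>E. (1 / real (card E)) *\<^sub>R x) \<in> rel_interior (convex hull E)"
    by (rule subsetD[OF explicit_subset_rel_interior_convex_hull_minimal[OF \<open>finite E\<close>]],
        intro CollectI exI[of _ "\<lambda>_. 1 / real (card E)"] conjI ballI)
      (use card_pos in simp_all)
  then have "(\<Sum>x\<in>E. (1 / real (card E)) *\<^sub>R x) \<in> rel_interior F"
    by (simp only: F_hull)
  then show ?thesis
    by (simp add: barycenter_def E_def scaleR_sum_right)
qed

lemma face_image_eq_iff_barycenter_fixed:
  assumes P: "polytope P" and F: "F face_of P" "F \<noteq> {}"
    and f: "linear f" "inj f" "f ` P = P"
  shows "f ` F = F \<longleftrightarrow> f (barycenter F) = barycenter F"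
proof
  assume "f ` F = F"
  then show "f (barycenter F) = barycenter F"
    using barycenter_linear_image[OF f(1,2)] by metis
next
  assume fixed: "f (barycenter F) = barycenter F"
  have "polytope F"
    by (rule face_of_polytope_polytope[OF P F(1)])
  then have "barycenter (f ` F) \<in> rel_interior (f ` F)" "barycenter F \<in> rel_interior F"
    using F(2) by (simp_all add: barycenter_in_rel_interior polytope_linear_image[OF f(1)])
  then have "rel_interior (f ` F) \<inter> rel_interior F \<noteq> {}"
    using barycenter_linear_image[OF f(1,2)] fixed by auto
  moreover have "f ` F face_of P"
    using face_of_linear_image[OF f(1,2), of F P] F(1) f(3) by simp
  ultimately show "f ` F = F"
    using face_of_eq[of "f ` F" P F] F(1) by simp
qed

lemma orthogonal_transformation_inner_inv:
  fixes f :: "'a::euclidean_space \<Rightarrow> 'a"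
  assumes "orthogonal_transformation f"
  shows "f a \<bullet> y = a \<bullet> inv f y"
proof -
  have "f a \<bullet> f (inv f y) = a \<bullet> inv f y"
    using assms by (simp add: orthogonal_transformation_def)
  then show ?thesis
    by (simp add: surj_f_inv_f[OF orthogonal_transformation_surj[OF assms]])
qed

lemma orthogonal_transformation_image_hyperplane_Int:
  fixes f :: "'a::euclidean_space \<Rightarrow> 'a"
  assumes f: "orthogonal_transformation f" "f ` P = P" "f a = a"
  shows "f ` (P \<inter> {y. a \<bullet> y = h}) = P \<inter> {y. a \<bullet> y = h}"
proof -
  have "f ` {y. a \<bullet> y = h} = {y. a \<bullet> y = h}"
    using bij_image_Collect_eq[OF orthogonal_transformation_bij[OF f(1)]]
      orthogonal_transformation_inner_inv[OF f(1), of a] f(3) by simp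
  then show ?thesis
    using image_Int[OF orthogonal_transformation_inj[OF f(1)]] f(2) by simp
qed

lemma face_image_Int_ex_extreme_point:
  fixes P :: "'a::euclidean_space set"
  assumes P: "polytope P" and F: "F face_of P"
    and f: "linear f" "inj f" "f ` P = P" and ne: "f ` F \<inter> F \<noteq> {}"
  obtains x where "x extreme_point_of P" "x \<in> F" "x \<in> f ` F"
proof -
  have G: "f ` F \<inter> F face_of P"
    using face_of_linear_image[OF f(1,2), of F P] F f(3) face_of_Int by auto
  then have "compact (f ` F \<inter> F)" "convex (f ` F \<inter> F)"
    using face_of_imp_compact face_of_imp_convex P polytope_imp_compact polytope_imp_convex
    by blast+
  then obtain x where "x extreme_point_of (f ` F \<inter> F)"
    using extreme_point_exists_convex ne by blast
  with that show thesis
    using extreme_point_of_face[OF G] by auto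
qed

section \<open>Root systems\<close>

lemma chamber_interior_inner_pos:
  assumes "x \<in> interior (chamber K)" "a \<in> K" "a \<noteq> 0"
  shows "0 < x \<bullet> a"
proof -
  have "chamber K \<subseteq> {y. a \<bullet> y \<ge> 0}"
    using assms(2) by (auto simp: chamber_def inner_commute)
  then have "x \<in> interior {y. a \<bullet> y \<ge> 0}"
    using interior_mono assms(1) by blast
  then have "0 < a \<bullet> x"
    using interior_halfspace_ge[OF assms(3), of 0] by blast
  then show ?thesis
    by (simp only: inner_commute)
qed

locale root_system =
  fixes R S :: "'a::euclidean_space set"
  assumes reduced_root_system: "reduced_root_system R"
    and simple_system: "simple_system R S"
begin

lemma finite_roots: "finite R"
  and zero_notin_roots: "0 \<notin> R"
  and span_roots: "span R = UNIV"
  and refl_image_roots: "a \<in> R \<Longrightarrow> refl a ` R = R"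
  and root_multiple: "a \<in> R \<Longrightarrow> c *\<^sub>R a \<in> R \<Longrightarrow> c = 1 \<or> c = -1"
  using reduced_root_system unfolding reduced_root_system_def by auto

lemma simple_subset_roots: "S \<subseteq> R"
  and independent_simple: "independent S"
  and root_sign_comb: "b \<in> R \<Longrightarrow>
    \<exists>c. b = (\<Sum>a\<in>S. c a *\<^sub>R a) \<and> ((\<forall>a\<in>S. c a \<ge> 0) \<or> (\<forall>a\<in>S. c a \<le> 0))"
  using simple_system unfolding simple_system_def by auto

lemma finite_simple: "finite S"
  using simple_subset_roots finite_roots finite_subset by blast

lemma zero_notin_simple: "0 \<notin> S"
  using simple_subset_roots zero_notin_roots by blast

lemma span_simple: "span S = UNIV"
proof -
  have "R \<subseteq> span S"
    using root_sign_comb by (fastforce intro: span_sum span_scale span_base)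
  then show ?thesis
    using span_roots span_minimal[of R "span S"] by auto
qed

lemma in_span_simple [simp]: "x \<in> span S"
  by (simp add: span_simple)

lemma sum_representation_simple: "(\<Sum>a\<in>S. representation S x a *\<^sub>R a) = x"
  by (rule sum_representation_eq[OF independent_simple in_span_simple finite_simple order_refl])

lemma representation_simple_zero_iff: "(\<forall>a\<in>S. representation S x a = 0) \<longleftrightarrow> x = 0"
  using sum_representation_simple[of x] by (auto simp: representation_zero)

lemma representation_simple_comb:
  "a \<in> S \<Longrightarrow> representation S (\<Sum>b\<in>S. c b *\<^sub>R b) a = c a"
  by (simp add: representation_sum[OF independent_simple] representation_scale[OF independent_simple]
      representation_basis[OF independent_simple] finite_simple if_distrib cong: if_cong)

definition positive :: "'a \<Rightarrow> bool" where
  "positive x \<longleftrightarrow> (\<forall>a\<in>S. 0 \<le> representation S x a)"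

lemma positive_simple: "a \<in> S \<Longrightarrow> positive a"
  by (simp add: positive_def representation_basis[OF independent_simple])

lemma positive_add: "positive x \<Longrightarrow> positive y \<Longrightarrow> positive (x + y)"
  by (simp add: positive_def representation_add[OF independent_simple])

lemma positive_scaleR: "0 \<le> c \<Longrightarrow> positive x \<Longrightarrow> positive (c *\<^sub>R x)"
  by (simp add: positive_def representation_scale[OF independent_simple])

lemma positive_or_negative_root: "b \<in> R \<Longrightarrow> positive b \<or> positive (- b)"
  using root_sign_comb[of b] representation_simple_comb
  by (fastforce simp: positive_def representation_neg[OF independent_simple])

lemma refl_simple_positive_root:
  assumes a: "a \<in> S" and b: "b \<in> R" "positive b" "b \<noteq> a"
  shows "positive (refl a b)"
proof (rule ccontr)
  assume "\<not> positive (refl a b)"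
  then have neg: "positive (- refl a b)"
    using positive_or_negative_root refl_image_roots simple_subset_roots a b(1) by blast
  define c where "c = (2 * (b \<bullet> a)) / (a \<bullet> a)"
  have coeff: "representation S (refl a b) g = representation S b g - c * (if g = a then 1 else 0)" for g
    by (simp add: refl_def c_def representation_diff[OF independent_simple]
        representation_scale[OF independent_simple] representation_basis[OF independent_simple a])
  \<comment> \<open>the reflection only changes the coefficient at \<open>a\<close>, so \<open>b\<close> is a multiple of \<open>a\<close>\<close>
  have "representation S (b - representation S b a *\<^sub>R a) g = 0" if "g \<in> S" for g
    using that neg b(2) coeff[of g]
    by (force simp: positive_def representation_diff[OF independent_simple]
        representation_scale[OF independent_simple] representation_basis[OF independent_simple a]
        representation_neg[OF independent_simple])
  then have "b - representation S b a *\<^sub>R a = 0"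
    using representation_simple_zero_iff by blast
  then have "b = representation S b a *\<^sub>R a"
    by simp
  moreover have "0 \<le> representation S b a"
    using a b(2) by (simp add: positive_def)
  ultimately have "b = a"
    using root_multiple[of a "representation S b a"] a b(1) simple_subset_roots by force
  with b(3) show False ..
qed

lemma refl_group_root:
  "K \<subseteq> R \<Longrightarrow> w \<in> refl_group K \<Longrightarrow> b \<in> R \<Longrightarrow> w b \<in> R"
  using refl_group_image_subset[of w K R] refl_image_roots by blast

lemma refl_word_exchange:
  assumes "set ks \<subseteq> S" "a \<in> S" "\<not> positive (refl_word ks a)"
  shows "\<exists>i<length ks. refl_word ks \<circ> refl a = refl_word (take i ks @ drop (Suc i) ks)"
  using assms
proof (induction ks)
  case Nil
  then show ?case by (simp add: positive_simple)
next
  case (Cons k ks)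
  show ?case
  proof (cases "positive (refl_word ks a)")
    case False
    moreover have "set ks \<subseteq> S"
      using Cons.prems(1) by simp
    ultimately obtain i where "i < length ks" "refl_word ks \<circ> refl a = refl_word (take i ks @ drop (Suc i) ks)"
      using Cons.IH Cons.prems(2) by blast
    moreover from this(2) have
      "refl_word (k # ks) \<circ> refl a = refl_word (k # take i ks @ drop (Suc i) ks)"
      by (simp only: refl_word.simps comp_assoc append_Cons)
    ultimately show ?thesis
      by (metis Suc_mono length_Cons take_Suc_Cons drop_Suc_Cons append_Cons)
  next
    case True
    have "refl_word ks a \<in> R"
      using Cons.prems(1,2) simple_subset_roots refl_group_root[of "set ks" "refl_word ks" a]
      by (auto simp: refl_group_eq)
    then have "refl_word ks a = k"
      using refl_simple_positive_root[of k "refl_word ks a"] True Cons.prems by auto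
    then have "refl_word (k # ks) \<circ> refl a = refl_word ks"
      using refl_orthogonal_transformation[OF orthogonal_transformation_refl_word, of ks a]
      by (simp add: fun_eq_iff)
    then show ?thesis
      by (metis length_Cons zero_less_Suc take_0 drop_Suc_Cons drop_0 append_Nil)
  qed
qed

lemma reduced_word_positive:
  assumes K: "K \<subseteq> S" and red: "reduced_word K (k # ks)"
  shows "positive (inv (refl_word ks) k)"
proof (rule ccontr)
  assume "\<not> positive (inv (refl_word ks) k)"
  moreover have "set (rev ks) \<subseteq> S" "k \<in> S"
    using red K by (auto simp: reduced_word_def)
  ultimately obtain i where i: "i < length ks"
    and del: "refl_word (rev ks) \<circ> refl k = refl_word (take i (rev ks) @ drop (Suc i) (rev ks))"
    using refl_word_exchange[of "rev ks" k] by (auto simp: refl_word_rev)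
  define ds where "ds = rev (take i (rev ks) @ drop (Suc i) (rev ks))"
  have "refl_word (k # ks) = inv (refl_word (rev (k # ks)))"
    using refl_word_rev[of "rev (k # ks)"] by simp
  also have "\<dots> = refl_word ds"
    using del refl_word_rev[of "rev ds"] by (simp add: refl_word_append ds_def)
  finally have "refl_word ds = refl_word (k # ks)" ..
  moreover have "set ds \<subseteq> set ks"
    by (auto simp: ds_def dest: in_set_takeD in_set_dropD)
  ultimately have "length (k # ks) \<le> length ds"
    using red unfolding reduced_word_def by (meson order_trans set_subset_Cons)
  then show False
    using i by (simp add: ds_def)
qed

lemma inner_eq_sum_representation:
  assumes "K \<subseteq> S" "x \<in> span K"
  shows "z \<bullet> x = (\<Sum>a\<in>K. representation S x a * (z \<bullet> a))"
proof -
  have "representation S x = representation K x"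
    by (rule representation_extend[OF independent_simple assms(2,1)])
  then have "representation S x a = 0" if "a \<notin> K" for a
    using that representation_ne_zero by metis
  then have "z \<bullet> x = (\<Sum>a\<in>S. if a \<in> K then representation S x a * (z \<bullet> a) else 0)"
    by (subst sum_representation_simple[of x, symmetric]) (auto simp: inner_sum_right intro: sum.cong)
  also have "\<dots> = (\<Sum>a\<in>K. representation S x a * (z \<bullet> a))"
    using assms(1) finite_simple by (simp add: sum.If_cases Int_absorb1)
  finally show ?thesis .
qed

lemma inner_nonneg_if_positive:
  assumes "K \<subseteq> S" "z \<in> chamber K" "x \<in> span K" "positive x"
  shows "0 \<le> z \<bullet> x"
  using assms inner_eq_sum_representation[OF assms(1,3), of z]
  by (auto simp: chamber_def positive_def intro!: sum_nonneg)

lemma inner_pos_if_positive: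
  assumes K: "K \<subseteq> S" and z: "\<And>k. k \<in> K \<Longrightarrow> 0 < z \<bullet> k"
    and x: "x \<in> span K" "positive x" "x \<noteq> 0"
  shows "0 < z \<bullet> x"
proof (rule ccontr)
  assume "\<not> 0 < z \<bullet> x"
  moreover have nonneg: "0 \<le> representation S x a * (z \<bullet> a)" if "a \<in> K" for a
    using that x(2) K z by (auto simp: positive_def less_imp_le)
  ultimately have "(\<Sum>a\<in>K. representation S x a * (z \<bullet> a)) = 0"
    using inner_eq_sum_representation[OF K x(1), of z] sum_nonneg[of K "\<lambda>a. representation S x a * (z \<bullet> a)"] nonneg
    by (metis antisym not_less)
  then have "\<forall>a\<in>K. representation S x a * (z \<bullet> a) = 0"
    using sum_nonneg_eq_0_iff[OF finite_subset[OF K finite_simple],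
        of "\<lambda>a. representation S x a * (z \<bullet> a)"] nonneg by blast
  then have "\<forall>a\<in>K. representation S x a = 0"
    using z by (metis less_irrefl mult_eq_0_iff)
  moreover have "representation S x a = 0" if "a \<notin> K" for a
    using that representation_extend[OF independent_simple x(1) K] representation_ne_zero by metis
  ultimately show False
    using x(3) representation_simple_zero_iff by metis
qed

lemma reduced_word_inner_nonneg:
  assumes K: "K \<subseteq> S" and red: "reduced_word K (k # ks)" and b: "b \<in> chamber K"
  shows "0 \<le> refl_word ks b \<bullet> k"
proof -
  let ?w = "refl_word ks"
  have "set ks \<subseteq> K" "k \<in> K"
    using red by (auto simp: reduced_word_def)
  then have "inv ?w k - k \<in> span K"
    using refl_word_diff_in_span[of "rev ks" k] span_mono[of "set ks" K] unfolding refl_word_rev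
    by auto
  then have "inv ?w k \<in> span K"
    using \<open>k \<in> K\<close> by (metis diff_add_cancel span_add span_base)
  then have "0 \<le> b \<bullet> inv ?w k"
    using inner_nonneg_if_positive[OF K b] reduced_word_positive[OF K red] by blast
  also have "b \<bullet> inv ?w k = ?w b \<bullet> k"
    using orthogonal_transformation_refl_word[of ks] orthogonal_transformation_bij[of ?w]
    by (metis bij_inv_eq_iff orthogonal_transformation_def)
  finally show ?thesis .
qed

lemma stabilizer_chamber:
  assumes K: "K \<subseteq> S" and b: "b \<in> chamber K"
  shows "{w \<in> refl_group K. w b = b} = refl_group {k \<in> K. refl k b = b}"
proof
  show "refl_group {k \<in> K. refl k b = b} \<subseteq> {w \<in> refl_group K. w b = b}"
    using refl_group_mono[of "{k \<in> K. refl k b = b}" K] refl_group_fixes by blast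
  have "w b = b \<longrightarrow> w \<in> refl_group {k \<in> K. refl k b = b}" if "w \<in> refl_group K" for w
    using that
  proof (induction rule: refl_group_reduced_induct)
    case id
    show ?case
      using refl_group.id by blast
  next
    case (step k ks)
    show ?case
    proof
      assume "(refl k \<circ> refl_word ks) b = b"
      then have "refl_word ks b = refl k b"
        by (metis comp_apply refl_refl)
      \<comment> \<open>\<open>0 \<le> r\<^sub>k b \<bullet> k = - (b \<bullet> k) \<le> 0\<close>, so \<open>r\<^sub>k\<close> fixes \<open>b\<close>\<close>
      moreover have "0 \<le> refl_word ks b \<bullet> k" "0 \<le> b \<bullet> k" "k \<in> K"
        using reduced_word_inner_nonneg[OF K step.hyps b] b reduced_word_ConsD(1)[OF step.hyps]
        by (auto simp: chamber_def)
      ultimately have "refl k b = b" "k \<in> K"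
        by (auto simp: refl_inner_self refl_fixed_iff)
      then show "refl k \<circ> refl_word ks \<in> refl_group {k \<in> K. refl k b = b}"
        using step.IH \<open>refl_word ks b = refl k b\<close> by (simp add: refl_group.step)
    qed
  qed
  then show "{w \<in> refl_group K. w b = b} \<subseteq> refl_group {k \<in> K. refl k b = b}"
    by blast
qed

lemma chamber_diff_positive:
  assumes K: "K \<subseteq> S" and u: "u \<in> chamber K" and w: "w \<in> refl_group K"
  shows "positive (u - w u)"
  using w
proof (induction rule: refl_group_reduced_induct)
  case id
  then show ?case by (simp add: positive_def representation_zero)
next
  case (step k ks)
  define c where "c = (2 * (refl_word ks u \<bullet> k)) / (k \<bullet> k)"
  have "u - (refl k \<circ> refl_word ks) u = (u - refl_word ks u) + c *\<^sub>R k"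
    by (simp add: refl_def c_def)
  moreover have "positive (c *\<^sub>R k)"
    using reduced_word_inner_nonneg[OF K step.hyps u] reduced_word_ConsD(1)[OF step.hyps] K
    by (intro positive_scaleR positive_simple) (auto simp: c_def)
  ultimately show ?case
    using step.IH positive_add by metis
qed

lemma chamber_orbit_inner_le:
  assumes K: "K \<subseteq> S" and u: "u \<in> chamber K" and z: "z \<in> chamber K"
    and w: "w \<in> refl_group K"
  shows "w u \<bullet> z \<le> u \<bullet> z"
proof -
  have "u - w u \<in> span K"
    using refl_group_diff_in_span[OF w, of u] by (metis minus_diff_eq span_neg)
  then have "0 \<le> z \<bullet> (u - w u)"
    using inner_nonneg_if_positive[OF K z] chamber_diff_positive[OF K u w] by blast
  then show ?thesis
    by (simp add: inner_diff_right inner_commute)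
qed

lemma chamber_orbit_inner_eq:
  assumes K: "K \<subseteq> S" and u: "u \<in> chamber K" and z: "\<And>k. k \<in> K \<Longrightarrow> 0 < z \<bullet> k"
    and w: "w \<in> refl_group K" and eq: "w u \<bullet> z = u \<bullet> z"
  shows "w u = u"
proof (rule ccontr)
  assume "w u \<noteq> u"
  moreover have "u - w u \<in> span K"
    using refl_group_diff_in_span[OF w, of u] by (metis minus_diff_eq span_neg)
  ultimately have "0 < z \<bullet> (u - w u)"
    using inner_pos_if_positive[OF K z] chamber_diff_positive[OF K u w] by simp
  with eq show False
    by (simp add: inner_diff_right inner_commute)
qed

lemma finite_refl_group:
  assumes "K \<subseteq> R"
  shows "finite (refl_group K)"
proof -
  \<comment> \<open>group elements are linear, hence determined by their values on the spanning set \<open>R\<close>\<close>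
  have "inj_on (\<lambda>w. restrict w R) (refl_group K)"
  proof (rule inj_onI)
    fix v w assume vw: "v \<in> refl_group K" "w \<in> refl_group K" "restrict v R = restrict w R"
    then have "v b = w b" if "b \<in> R" for b
      using that by (metis restrict_apply')
    then show "v = w"
      using linear_eq_on_span[of v w R] vw(1,2) span_roots
      by (metis UNIV_I ext orthogonal_transformation_linear orthogonal_transformation_refl_group)
  qed
  moreover have "(\<lambda>w. restrict w R) ` refl_group K \<subseteq> PiE R (\<lambda>_. R)"
    using refl_group_root[OF assms] by (auto simp: restrict_PiE_iff)
  then have "finite ((\<lambda>w. restrict w R) ` refl_group K)"
    using finite_PiE[OF finite_roots, of "\<lambda>_. R"] finite_roots finite_subset by blast
  ultimately show ?thesis
    using finite_imageD by blast
qed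

definition height :: "'a \<Rightarrow> real" where
  "height x = (\<Sum>a\<in>S. representation S x a)"

lemma height_diff_scaleR_simple: "k \<in> S \<Longrightarrow> height (x - c *\<^sub>R k) = height x - c"
  by (simp add: height_def representation_diff[OF independent_simple]
      representation_scale[OF independent_simple] representation_basis[OF independent_simple]
      sum_subtractf finite_simple if_distrib[of "(*) c"] cong: if_cong)

lemma ex_refl_group_chamber:
  assumes K: "K \<subseteq> S"
  obtains w where "w \<in> refl_group K" "w x \<in> chamber K"
proof -
  let ?heights = "(\<lambda>w. height (w x)) ` refl_group K"
  have "finite ?heights" "?heights \<noteq> {}"
    using finite_refl_group K simple_subset_roots refl_group.id by blast+
  then obtain w where w: "w \<in> refl_group K" "height (w x) = Max ?heights"
    using Max_in by (metis (no_types, lifting) imageE)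
  then have max: "height (v x) \<le> height (w x)" if "v \<in> refl_group K" for v
    using that \<open>finite ?heights\<close> by (metis Max_ge image_eqI)
  \<comment> \<open>a simple reflection \<open>r\<^sub>k\<close> with \<open>w x \<bullet> k < 0\<close> would increase the height\<close>
  have "w x \<in> chamber K"
  proof (rule ccontr)
    assume "w x \<notin> chamber K"
    then obtain k where k: "k \<in> K" "w x \<bullet> k < 0"
      by (auto simp: chamber_def not_le)
    define c where "c = (2 * (w x \<bullet> k)) / (k \<bullet> k)"
    have "0 < k \<bullet> k"
      using k(1) K zero_notin_simple by auto
    then have "c < 0"
      using k(2) by (simp add: c_def divide_neg_pos)
    moreover have "(refl k \<circ> w) x = w x - c *\<^sub>R k"
      by (simp add: refl_def c_def)
    moreover have "height ((refl k \<circ> w) x) \<le> height (w x)"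
      using max refl_group.step[OF k(1) w(1)] by blast
    ultimately show False
      using height_diff_scaleR_simple k(1) K by auto
  qed
  with w that show thesis by blast
qed

definition regular :: "'a \<Rightarrow> bool" where
  "regular x \<longleftrightarrow> (\<forall>b\<in>R. x \<bullet> b \<noteq> 0)"

lemma regular_if_interior_chamber:
  assumes "x \<in> interior (chamber S)"
  shows "regular x"
  unfolding regular_def
proof
  fix b assume b: "b \<in> R"
  have pos: "0 < x \<bullet> a" if "a \<in> S" for a
    using chamber_interior_inner_pos[OF assms that] zero_notin_simple that by blast
  have "b \<noteq> 0"
    using b zero_notin_roots by blast
  then have "0 < x \<bullet> b \<or> 0 < x \<bullet> (- b)"
    using positive_or_negative_root[OF b] inner_pos_if_positive[OF order_refl pos, of b]
      inner_pos_if_positive[OF order_refl pos, of "- b"] by auto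
  then show "x \<bullet> b \<noteq> 0"
    by auto
qed

lemma regular_refl_group_image:
  assumes "w \<in> refl_group S" "regular (w x)"
  shows "regular x"
  unfolding regular_def
proof
  fix b assume "b \<in> R"
  then have "w x \<bullet> w b \<noteq> 0"
    using assms refl_group_root simple_subset_roots by (auto simp: regular_def)
  then show "x \<bullet> b \<noteq> 0"
    using orthogonal_transformation_refl_group[OF assms(1)] by (simp add: orthogonal_transformation_def)
qed

lemma regular_orbit_argmax_unique:
  assumes K: "K \<subseteq> S" and x: "regular x" and s: "s \<in> refl_group K"
    and max: "\<And>t. t \<in> refl_group K \<Longrightarrow> t a \<bullet> x \<le> a \<bullet> x" and eq: "s a \<bullet> x = a \<bullet> x"
  shows "s a = a"
proof -
  have KS: "refl_group K \<subseteq> refl_group S"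
    by (rule refl_group_mono[OF K])
  obtain c where c: "c \<in> refl_group K" "c x \<in> chamber K"
    using ex_refl_group_chamber[OF K] .
  obtain g where g: "g \<in> refl_group K" "g a \<in> chamber K"
    using ex_refl_group_chamber[OF K] .
  have "regular (c x)"
    using regular_refl_group_image[of "inv c" "c x"] refl_group_inv c(1) KS x by auto
  then have cx_pos: "0 < c x \<bullet> k" if "k \<in> K" for k
    using c(2) that K simple_subset_roots by (force simp: chamber_def regular_def)
  have c_inner: "y \<bullet> x = c y \<bullet> c x" for y
    using orthogonal_transformation_refl_group[OF c(1)] by (simp add: orthogonal_transformation_def)
  \<comment> \<open>moving \<open>x\<close> and \<open>a\<close> into \<open>C\<^sub>K\<close> turns the maximum into the dominance inequality\<close>
  have shift: "t a \<bullet> x = (c \<circ> t \<circ> inv g) (g a) \<bullet> c x" if "t \<in> refl_group K" for t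
    using g(1) c_inner by simp
  have shift_mem: "c \<circ> t \<circ> inv g \<in> refl_group K" if "t \<in> refl_group K" for t
    using that c(1) g(1) by (simp add: refl_group_comp refl_group_inv)
  have "a \<bullet> x \<le> g a \<bullet> c x"
    using shift[OF refl_group.id] chamber_orbit_inner_le[OF K g(2) c(2) shift_mem[OF refl_group.id]]
    by simp
  moreover have "g a \<bullet> c x \<le> a \<bullet> x"
    using max[OF refl_group_comp[OF refl_group_inv[OF c(1)] g(1)]] c_inner[of "inv c (g a)"] c(1)
    by simp
  ultimately have top: "a \<bullet> x = g a \<bullet> c x"
    by linarith
  have "c (t a) = g a" if "t \<in> refl_group K" "t a \<bullet> x = a \<bullet> x" for t
    using chamber_orbit_inner_eq[OF K g(2) cx_pos shift_mem[OF that(1)]] shift[OF that(1)] that(2) top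
      g(1) by simp
  from this[OF refl_group.id] this[OF s eq] have "c (s a) = c a"
    by simp
  then show ?thesis
    using inv_refl_group_apply[OF c(1)] by metis
qed

lemma refl_group_image_orbit_hull:
  "w \<in> refl_group S \<Longrightarrow>
    w ` (convex hull (\<Union>v\<in>refl_group S. v ` \<Lambda>)) = convex hull (\<Union>v\<in>refl_group S. v ` \<Lambda>)"
  by (simp add: convex_hull_linear_image orthogonal_transformation_linear
      orthogonal_transformation_refl_group refl_group_image_orbit)

lemma polytope_orbit_hull: "finite \<Lambda> \<Longrightarrow> polytope (convex hull (\<Union>w\<in>refl_group S. w ` \<Lambda>))"
  using finite_refl_group[OF simple_subset_roots] by (simp add: polytope_convex_hull)

lemma face_stabilizer:
  assumes \<Lambda>: "finite \<Lambda>" and K: "K \<subseteq> S"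
    and F: "F face_of convex hull (\<Union>w\<in>refl_group S. w ` \<Lambda>)" "F \<noteq> {}"
    and b: "barycenter F \<in> chamber K"
  shows "{w \<in> refl_group K. w ` F = F} = refl_group {k \<in> K. refl k (barycenter F) = barycenter F}"
proof -
  have "w ` F = F \<longleftrightarrow> w (barycenter F) = barycenter F" if "w \<in> refl_group K" for w
  proof (rule face_image_eq_iff_barycenter_fixed[OF polytope_orbit_hull[OF \<Lambda>] F])
    have "w \<in> refl_group S"
      using that refl_group_mono[OF K] by blast
    then show "linear w" "inj w"
      "w ` (convex hull (\<Union>w\<in>refl_group S. w ` \<Lambda>)) = convex hull (\<Union>w\<in>refl_group S. w ` \<Lambda>)"
      using orthogonal_transformation_refl_group[of w S] refl_group_image_orbit_hull
      by (simp_all add: orthogonal_transformation_linear orthogonal_transformation_inj)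
  qed
  then show ?thesis
    using stabilizer_chamber[OF K b] by blast
qed

lemma non_degenerate_vertex_regular:
  assumes nd: "non_degenerate S (convex hull (\<Union>w\<in>refl_group S. w ` \<Lambda>))"
    and x: "x extreme_point_of convex hull (\<Union>w\<in>refl_group S. w ` \<Lambda>)"
  shows "regular x"
proof -
  obtain w where w: "w \<in> refl_group S" "w x \<in> chamber S"
    using ex_refl_group_chamber[OF order_refl] .
  have "w x extreme_point_of convex hull (\<Union>w\<in>refl_group S. w ` \<Lambda>)"
    using x extreme_point_of_linear_image[of w x] refl_group_image_orbit_hull[OF w(1)]
      orthogonal_transformation_refl_group[OF w(1)]
    by (metis orthogonal_transformation_inj orthogonal_transformation_linear)
  then have "w x \<in> interior (chamber S)"
    using nd w(2) closure_subset by (auto simp: non_degenerate_def frontier_def)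
  then show ?thesis
    using regular_if_interior_chamber regular_refl_group_image[OF w(1)] by blast
qed

lemma non_degenerate_face_image_Int:
  assumes \<Lambda>: "finite \<Lambda>" and K: "K \<subseteq> S"
    and F: "F face_of convex hull (\<Union>w\<in>refl_group S. w ` \<Lambda>)"
    and nd: "non_degenerate S (convex hull (\<Union>w\<in>refl_group S. w ` \<Lambda>))"
    and s: "s \<in> refl_group K"
  shows "s ` F \<inter> F = F \<or> s ` F \<inter> F = {}"
proof (rule disjCI)
  assume "s ` F \<inter> F \<noteq> {}"
  define P where "P = convex hull (\<Union>w\<in>refl_group S. w ` \<Lambda>)"
  have P: "polytope P" "\<And>w. w \<in> refl_group S \<Longrightarrow> w ` P = P" and F_P: "F face_of P"
    unfolding P_def using polytope_orbit_hull[OF \<Lambda>] refl_group_image_orbit_hull F by auto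
  have s_orth: "orthogonal_transformation s" and s_P: "s ` P = P"
    using s refl_group_mono[OF K] orthogonal_transformation_refl_group P(2) by blast+
  obtain x where "x extreme_point_of P" "x \<in> F" "x \<in> s ` F"
    using face_image_Int_ex_extreme_point[OF P(1) F_P _ _ s_P \<open>s ` F \<inter> F \<noteq> {}\<close>] s_orth
    by (metis orthogonal_transformation_inj orthogonal_transformation_linear)
  then have x: "regular x" "x \<in> F" "inv s x \<in> F"
    using non_degenerate_vertex_regular nd s by (auto simp: P_def)
  obtain a h where a: "P \<subseteq> {y. a \<bullet> y \<le> h}" "F = P \<inter> {y. a \<bullet> y = h}"
    using exposed_face_of_polyhedron[OF polytope_imp_polyhedron[OF P(1)]] F_P
    unfolding exposed_face_of_def by blast
  have "s a = a"
  proof (rule regular_orbit_argmax_unique[OF K x(1) s])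
    show "t a \<bullet> x \<le> a \<bullet> x" if "t \<in> refl_group K" for t
    proof -
      have "inv t \<in> refl_group S"
        using refl_group_inv[OF that] refl_group_mono[OF K] by blast
      then have "a \<bullet> inv t x \<le> h"
        using P(2) a x(2) by blast
      then show ?thesis
        using orthogonal_transformation_inner_inv[OF orthogonal_transformation_refl_group[OF that]]
          x(2) a(2) by simp
    qed
    show "s a \<bullet> x = a \<bullet> x"
      using orthogonal_transformation_inner_inv[OF s_orth] x(2,3) a(2) by simp
  qed
  then have "s ` F = F"
    using orthogonal_transformation_image_hyperplane_Int[OF s_orth s_P] a(2) by simp
  then show "s ` F \<inter> F = F"
    by simp
qed

end

theorem lemma2p5:
  fixes R S K \<Lambda> F :: "'a::euclidean_space set"
  assumes "reduced_root_system R"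
    and "simple_system R S"
    and "finite \<Lambda>" and "\<Lambda> \<subseteq> chamber S"
    and "aff_dim (convex hull (\<Union>w\<in>refl_group S. w ` \<Lambda>)) = int DIM('a)"
    and "K \<subseteq> S"
    and "F facet_of (convex hull (\<Union>w\<in>refl_group S. w ` \<Lambda>))"
    and "barycenter F \<in> chamber K"
  shows "{w \<in> refl_group K. w ` F = F} = refl_group {k \<in> K. refl k (barycenter F) = barycenter F}
    \<and> (non_degenerate S (convex hull (\<Union>w\<in>refl_group S. w ` \<Lambda>)) \<longrightarrow>
         (\<forall>s\<in>refl_group K. s ` F \<inter> F = F \<or> s ` F \<inter> F = {}))"
proof -
  interpret root_system R S
    using assms(1,2) by unfold_locales
  have F: "F face_of convex hull (\<Union>w\<in>refl_group S. w ` \<Lambda>)" "F \<noteq> {}"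
    using assms(7) by (auto simp: facet_of_def)
  show ?thesis
    using face_stabilizer[OF assms(3,6) F assms(8)] non_degenerate_face_image_Int[OF assms(3,6) F(1)]
    by blast
qed

end
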